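(* Let $\mathcal C$ be an $R$-coring satisfying the left $\alpha$-condition. The following are equivalent: (i) $\mathrm{Rat}^{\mathcal C}({}^*\mathcal C)$ is dense in ${}^*\mathcal C$ in the $\mathcal C$-adic topology; (ii) $\mathrm{Rat}^{\mathcal C}({}^*\mathcal C)$ is dense in ${}^*\mathcal C$ in the finite topology; (iii) $\mathrm{Rat}^{\mathcal C}$ is an exact functor.
   Context: An $R$-coring is a triple $(\mathcal C,\Delta,\varepsilon)$ with $\mathcal C$ an $R$-bimodule and $\Delta:\mathcal C\to\mathcal C\otimes_R\mathcal C$, $\varepsilon:\mathcal C\to R$ coassociative and counital $R$-bimodule maps; write $\Delta(c)=c_{(1)}\otimes_R c_{(2)}$. ${}^*\mathcal C={}_R\mathrm{Hom}(\mathcal C,R)$ is a ring with product $(f\#g)(c)=g(c_{(1)}f(c_{(2)}))$ and unit $\varepsilon$. A right $\mathcal C$-comodule is a right $R$-module $N$ with a right $R$-linear coassociative counital map $N\to N\otimes_R\mathcal C$, $n\mapsto n_{[0]}\otimes n_{[1]}$; it is a right ${}^*\mathcal C$-module via $n\cdot f=n_{[0]}f(n_{[1]})$; in particular $\mathcal C$ is a right ${}^*\mathcal C$-module via $c\cdot f=c_{(1)}f(c_{(2)})$. $\mathcal C$ satisfies the left $\alpha$-condition if it is locally projective as a left $R$-module, equivalently for every right $R$-module $N$ the map $N\otimes_R\mathcal C\to\mathrm{Hom}_R({}^*\mathcal C,N)$, $n\otimes c\mapsto(f\mapsto nf(c))$, is injective; then the category $\mathcal M^{\mathcal C}$ of right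 comodules is a full subcategory of right ${}^*\mathcal C$-modules (equal to $\sigma[\mathcal C_{{}^*\mathcal C}]$). For a right ${}^*\mathcal C$-module $M$, $\mathrm{Rat}^{\mathcal C}(M)$ is the set of $m\in M$ for which there is $\sum_i m_i\otimes c_i\in M\otimes_R\mathcal C$ with $m\cdot f=\sum_i m_if(c_i)$ for all $f\in{}^*\mathcal C$; it is the largest ${}^*\mathcal C$-submodule of $M$ that is a right $\mathcal C$-comodule inducing the given action, and $\mathrm{Rat}^{\mathcal C}$ is a left exact functor from right ${}^*\mathcal C$-modules to $\mathcal M^{\mathcal C}$. Here ${}^*\mathcal C$ is regarded as a right module over itself. The finite topology on ${}^*\mathcal C={}_R\mathrm{Hom}(\mathcal C,R)$ has basic open sets $\{g\mid g(c)=f(c)\ \forall c\in F\}$, $F\subseteq\mathcal C$ finite. The $\mathcal C$-adic topology on ${}^*\mathcal C$ is the topology induced via $f\mapsto(c\mapsto c\cdot f)$ by the finite topology on $\mathrm{End}_{\mathbb Z}(\mathcal C)$; its basic open sets are $\{g\mid c\cdot g=c\cdot f\ \forall c\in F\}$, $F\subseteq\mathcal C$ finite. *)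

theory Defs
  imports Main
begin

text \<open>The R-bimodule C is a type 'c of class ab_group_add, with left action lm and right action rm.
Elements of tensor products over R are represented by finite formal sums (lists) modulo the
subgroup of the free abelian group generated by the usual (bi/tri)additivity and balancing
relations. The comultiplication is given as a function choosing, for each c, a representative
list of pairs (a,b) with Delta(c) = sum a \<otimes> b.\<close>

definition delta :: "'a \<Rightarrow> 'a \<Rightarrow> int" where
  "delta x = (\<lambda>p. if p = x then 1 else 0)"

definition fs :: "'a list \<Rightarrow> 'a \<Rightarrow> int" where
  "fs xs = (\<lambda>p. int (count_list xs p))"

definition bimodule :: "('r::ring_1 \<Rightarrow> 'c::ab_group_add \<Rightarrow> 'c) \<Rightarrow> ('c \<Rightarrow> 'r \<Rightarrow> 'c) \<Rightarrow> bool" where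
  "bimodule lm rm \<longleftrightarrow>
     (\<forall>r a b. lm r (a + b) = lm r a + lm r b) \<and>
     (\<forall>r s a. lm (r + s) a = lm r a + lm s a) \<and>
     (\<forall>r s a. lm (r * s) a = lm r (lm s a)) \<and>
     (\<forall>a. lm 1 a = a) \<and>
     (\<forall>r a b. rm (a + b) r = rm a r + rm b r) \<and>
     (\<forall>r s a. rm a (r + s) = rm a r + rm a s) \<and>
     (\<forall>r s a. rm a (r * s) = rm (rm a r) s) \<and>
     (\<forall>a. rm a 1 = a) \<and>
     (\<forall>r s a. rm (lm r a) s = lm r (rm a s))"

inductive_set tens2_rel :: "('r::ring_1 \<Rightarrow> 'c::ab_group_add \<Rightarrow> 'c) \<Rightarrow> ('c \<Rightarrow> 'r \<Rightarrow> 'c)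
    \<Rightarrow> ('c \<times> 'c \<Rightarrow> int) set" for lm rm where
  t2_zero: "(\<lambda>p. 0) \<in> tens2_rel lm rm"
| t2_add1: "(\<lambda>p. delta (a + a', b) p - delta (a, b) p - delta (a', b) p) \<in> tens2_rel lm rm"
| t2_add2: "(\<lambda>p. delta (a, b + b') p - delta (a, b) p - delta (a, b') p) \<in> tens2_rel lm rm"
| t2_bal: "(\<lambda>p. delta (rm a r, b) p - delta (a, lm r b) p) \<in> tens2_rel lm rm"
| t2_plus: "u \<in> tens2_rel lm rm \<Longrightarrow> v \<in> tens2_rel lm rm \<Longrightarrow> (\<lambda>p. u p + v p) \<in> tens2_rel lm rm"
| t2_neg: "u \<in> tens2_rel lm rm \<Longrightarrow> (\<lambda>p. - u p) \<in> tens2_rel lm rm"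

inductive_set tens3_rel :: "('r::ring_1 \<Rightarrow> 'c::ab_group_add \<Rightarrow> 'c) \<Rightarrow> ('c \<Rightarrow> 'r \<Rightarrow> 'c)
    \<Rightarrow> ('c \<times> 'c \<times> 'c \<Rightarrow> int) set" for lm rm where
  t3_zero: "(\<lambda>p. 0) \<in> tens3_rel lm rm"
| t3_add1: "(\<lambda>p. delta (a + a', b, c) p - delta (a, b, c) p - delta (a', b, c) p) \<in> tens3_rel lm rm"
| t3_add2: "(\<lambda>p. delta (a, b + b', c) p - delta (a, b, c) p - delta (a, b', c) p) \<in> tens3_rel lm rm"
| t3_add3: "(\<lambda>p. delta (a, b, c + c') p - delta (a, b, c) p - delta (a, b, c') p) \<in> tens3_rel lm rm"
| t3_bal1: "(\<lambda>p. delta (rm a r, b, c) p - delta (a, lm r b, c) p) \<in> tens3_rel lm rm"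
| t3_bal2: "(\<lambda>p. delta (a, rm b r, c) p - delta (a, b, lm r c) p) \<in> tens3_rel lm rm"
| t3_plus: "u \<in> tens3_rel lm rm \<Longrightarrow> v \<in> tens3_rel lm rm \<Longrightarrow> (\<lambda>p. u p + v p) \<in> tens3_rel lm rm"
| t3_neg: "u \<in> tens3_rel lm rm \<Longrightarrow> (\<lambda>p. - u p) \<in> tens3_rel lm rm"

definition teq2 :: "('r::ring_1 \<Rightarrow> 'c::ab_group_add \<Rightarrow> 'c) \<Rightarrow> ('c \<Rightarrow> 'r \<Rightarrow> 'c)
    \<Rightarrow> ('c \<times> 'c) list \<Rightarrow> ('c \<times> 'c) list \<Rightarrow> bool" where
  "teq2 lm rm xs ys \<longleftrightarrow> (\<lambda>p. fs xs p - fs ys p) \<in> tens2_rel lm rm"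

definition teq3 :: "('r::ring_1 \<Rightarrow> 'c::ab_group_add \<Rightarrow> 'c) \<Rightarrow> ('c \<Rightarrow> 'r \<Rightarrow> 'c)
    \<Rightarrow> ('c \<times> 'c \<times> 'c) list \<Rightarrow> ('c \<times> 'c \<times> 'c) list \<Rightarrow> bool" where
  "teq3 lm rm xs ys \<longleftrightarrow> (\<lambda>p. fs xs p - fs ys p) \<in> tens3_rel lm rm"

definition coring :: "('r::ring_1 \<Rightarrow> 'c::ab_group_add \<Rightarrow> 'c) \<Rightarrow> ('c \<Rightarrow> 'r \<Rightarrow> 'c)
    \<Rightarrow> ('c \<Rightarrow> ('c \<times> 'c) list) \<Rightarrow> ('c \<Rightarrow> 'r) \<Rightarrow> bool" where
  "coring lm rm Dl eps \<longleftrightarrow>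
     bimodule lm rm \<and>
     \<comment> \<open>Delta is an R-bimodule map C \<rightarrow> C \<otimes>_R C\<close>
     (\<forall>c d. teq2 lm rm (Dl (c + d)) (Dl c @ Dl d)) \<and>
     (\<forall>r c. teq2 lm rm (Dl (lm r c)) (map (\<lambda>(a, b). (lm r a, b)) (Dl c))) \<and>
     (\<forall>r c. teq2 lm rm (Dl (rm c r)) (map (\<lambda>(a, b). (a, rm b r)) (Dl c))) \<and>
     \<comment> \<open>eps is an R-bimodule map C \<rightarrow> R\<close>
     (\<forall>c d. eps (c + d) = eps c + eps d) \<and>
     (\<forall>r c. eps (lm r c) = r * eps c) \<and>
     (\<forall>r c. eps (rm c r) = eps c * r) \<and>
     \<comment> \<open>coassociativity: (Delta \<otimes> C) o Delta = (C \<otimes> Delta) o Delta\<close>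
     (\<forall>c. teq3 lm rm
        (concat (map (\<lambda>(a, b). map (\<lambda>(x, y). (x, y, b)) (Dl a)) (Dl c)))
        (concat (map (\<lambda>(a, b). map (\<lambda>(x, y). (a, x, y)) (Dl b)) (Dl c)))) \<and>
     \<comment> \<open>counitality\<close>
     (\<forall>c. sum_list (map (\<lambda>(a, b). lm (eps a) b) (Dl c)) = c) \<and>
     (\<forall>c. sum_list (map (\<lambda>(a, b). rm a (eps b)) (Dl c)) = c)"

definition ldual :: "('r::ring_1 \<Rightarrow> 'c::ab_group_add \<Rightarrow> 'c) \<Rightarrow> ('c \<Rightarrow> 'r) set" where
  "ldual lm = {f. (\<forall>a b. f (a + b) = f a + f b) \<and> (\<forall>r a. f (lm r a) = r * f a)}"

definition cact :: "('c::ab_group_add \<Rightarrow> 'r::ring_1 \<Rightarrow> 'c) \<Rightarrow> ('c \<Rightarrow> ('c \<times> 'c) list)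
    \<Rightarrow> 'c \<Rightarrow> ('c \<Rightarrow> 'r) \<Rightarrow> 'c" where
  "cact rm Dl c f = sum_list (map (\<lambda>(a, b). rm a (f b)) (Dl c))"

definition conv :: "('c::ab_group_add \<Rightarrow> 'r::ring_1 \<Rightarrow> 'c) \<Rightarrow> ('c \<Rightarrow> ('c \<times> 'c) list)
    \<Rightarrow> ('c \<Rightarrow> 'r) \<Rightarrow> ('c \<Rightarrow> 'r) \<Rightarrow> ('c \<Rightarrow> 'r)" where
  "conv rm Dl f g = (\<lambda>c. g (cact rm Dl c f))"

text \<open>Left alpha-condition: C is locally projective as a left R-module
  (dual basis characterisation of local projectivity, Zimmermann-Huisgen).\<close>
definition left_alpha :: "('r::ring_1 \<Rightarrow> 'c::ab_group_add \<Rightarrow> 'c) \<Rightarrow> bool" where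
  "left_alpha lm \<longleftrightarrow>
     (\<forall>F. finite F \<longrightarrow> (\<exists>ps :: (('c \<Rightarrow> 'r) \<times> 'c) list.
        (\<forall>(f, d) \<in> set ps. f \<in> ldual lm) \<and>
        (\<forall>c \<in> F. c = sum_list (map (\<lambda>(f, d). lm (f c) d) ps))))"

record ('m, 'c, 'r) rmod =
  mcarrier :: "'m set"
  madd :: "'m \<Rightarrow> 'm \<Rightarrow> 'm"
  mzero :: 'm
  mneg :: "'m \<Rightarrow> 'm"
  mact :: "'m \<Rightarrow> ('c \<Rightarrow> 'r) \<Rightarrow> 'm"

definition rmodule :: "('r::ring_1 \<Rightarrow> 'c::ab_group_add \<Rightarrow> 'c) \<Rightarrow> ('c \<Rightarrow> 'r \<Rightarrow> 'c)
    \<Rightarrow> ('c \<Rightarrow> ('c \<times> 'c) list) \<Rightarrow> ('c \<Rightarrow> 'r) \<Rightarrow> ('m, 'c, 'r) rmod \<Rightarrow> bool" where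
  "rmodule lm rm Dl eps M \<longleftrightarrow>
     mzero M \<in> mcarrier M \<and>
     (\<forall>x \<in> mcarrier M. \<forall>y \<in> mcarrier M. madd M x y \<in> mcarrier M) \<and>
     (\<forall>x \<in> mcarrier M. mneg M x \<in> mcarrier M) \<and>
     (\<forall>x \<in> mcarrier M. \<forall>y \<in> mcarrier M. \<forall>z \<in> mcarrier M.
        madd M (madd M x y) z = madd M x (madd M y z)) \<and>
     (\<forall>x \<in> mcarrier M. \<forall>y \<in> mcarrier M. madd M x y = madd M y x) \<and>
     (\<forall>x \<in> mcarrier M. madd M (mzero M) x = x) \<and>
     (\<forall>x \<in> mcarrier M. madd M (mneg M x) x = mzero M) \<and>
     (\<forall>x \<in> mcarrier M. \<forall>f \<in> ldual lm. mact M x f \<in> mcarrier M) \<and>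
     (\<forall>x \<in> mcarrier M. \<forall>y \<in> mcarrier M. \<forall>f \<in> ldual lm.
        mact M (madd M x y) f = madd M (mact M x f) (mact M y f)) \<and>
     (\<forall>x \<in> mcarrier M. \<forall>f \<in> ldual lm. \<forall>g \<in> ldual lm.
        mact M x (\<lambda>c. f c + g c) = madd M (mact M x f) (mact M x g)) \<and>
     (\<forall>x \<in> mcarrier M. \<forall>f \<in> ldual lm. \<forall>g \<in> ldual lm.
        mact M x (conv rm Dl f g) = mact M (mact M x f) g) \<and>
     (\<forall>x \<in> mcarrier M. mact M x eps = x)"

definition rmod_hom :: "('r::ring_1 \<Rightarrow> 'c::ab_group_add \<Rightarrow> 'c)
    \<Rightarrow> ('m, 'c, 'r) rmod \<Rightarrow> ('n, 'c, 'r) rmod \<Rightarrow> ('m \<Rightarrow> 'n) \<Rightarrow> bool" where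
  "rmod_hom lm M N h \<longleftrightarrow>
     (\<forall>x \<in> mcarrier M. h x \<in> mcarrier N) \<and>
     (\<forall>x \<in> mcarrier M. \<forall>y \<in> mcarrier M. h (madd M x y) = madd N (h x) (h y)) \<and>
     (\<forall>x \<in> mcarrier M. \<forall>f \<in> ldual lm. h (mact M x f) = mact N (h x) f)"

definition msum :: "('m, 'c, 'r) rmod \<Rightarrow> 'm list \<Rightarrow> 'm" where
  "msum M xs = foldr (madd M) xs (mzero M)"

text \<open>The right R-action on M is the one
  induced by the ring map R \<rightarrow> *C, r \<mapsto> eps(-) r.\<close>
definition Rat :: "('r::ring_1 \<Rightarrow> 'c::ab_group_add \<Rightarrow> 'c) \<Rightarrow> ('c \<Rightarrow> 'r)
    \<Rightarrow> ('m, 'c, 'r) rmod \<Rightarrow> 'm set" where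
  "Rat lm eps M = {m \<in> mcarrier M. \<exists>ps :: ('m \<times> 'c) list.
      (\<forall>(mi, ci) \<in> set ps. mi \<in> mcarrier M) \<and>
      (\<forall>f \<in> ldual lm. mact M m f =
          msum M (map (\<lambda>(mi, ci). mact M mi (\<lambda>c. eps c * f ci)) ps))}"

definition dual_rmod :: "('r::ring_1 \<Rightarrow> 'c::ab_group_add \<Rightarrow> 'c) \<Rightarrow> ('c \<Rightarrow> 'r \<Rightarrow> 'c)
    \<Rightarrow> ('c \<Rightarrow> ('c \<times> 'c) list) \<Rightarrow> ('c \<Rightarrow> 'r, 'c, 'r) rmod" where
  "dual_rmod lm rm Dl =
     \<lparr> mcarrier = ldual lm, madd = (\<lambda>f g c. f c + g c), mzero = (\<lambda>c. 0),
       mneg = (\<lambda>f c. - f c), mact = conv rm Dl \<rparr>"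

text \<open>Density of a subset S of *C in the finite topology: every basic open set
  {g. \<forall>c\<in>F. g c = f c} (f in *C, F finite) meets S.\<close>
definition dense_finite_top :: "('r::ring_1 \<Rightarrow> 'c::ab_group_add \<Rightarrow> 'c) \<Rightarrow> ('c \<Rightarrow> 'r) set \<Rightarrow> bool" where
  "dense_finite_top lm S \<longleftrightarrow>
     (\<forall>f \<in> ldual lm. \<forall>F. finite F \<longrightarrow> (\<exists>g \<in> S. \<forall>c \<in> F. g c = f c))"

text \<open>Density in the C-adic topology: every basic open set
  {g. \<forall>c\<in>F. c \<cdot> g = c \<cdot> f} (f in *C, F finite) meets S.\<close>
definition dense_Cadic_top :: "('r::ring_1 \<Rightarrow> 'c::ab_group_add \<Rightarrow> 'c) \<Rightarrow> ('c \<Rightarrow> 'r \<Rightarrow> 'c)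
    \<Rightarrow> ('c \<Rightarrow> ('c \<times> 'c) list) \<Rightarrow> ('c \<Rightarrow> 'r) set \<Rightarrow> bool" where
  "dense_Cadic_top lm rm Dl S \<longleftrightarrow>
     (\<forall>f \<in> ldual lm. \<forall>F. finite F \<longrightarrow> (\<exists>g \<in> S. \<forall>c \<in> F. cact rm Dl c g = cact rm Dl c f))"

text \<open>Exactness of Rat^C: for every short exact sequence 0 \<rightarrow> K \<rightarrow> M \<rightarrow> N \<rightarrow> 0 of right
  *C-modules (carriers in the types 'k, 'm, 'n), the induced sequence
  0 \<rightarrow> Rat(K) \<rightarrow> Rat(M) \<rightarrow> Rat(N) \<rightarrow> 0 is exact.\<close>
definition Rat_exact :: "('r::ring_1 \<Rightarrow> 'c::ab_group_add \<Rightarrow> 'c) \<Rightarrow> ('c \<Rightarrow> 'r \<Rightarrow> 'c)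
    \<Rightarrow> ('c \<Rightarrow> ('c \<times> 'c) list) \<Rightarrow> ('c \<Rightarrow> 'r) \<Rightarrow> 'k itself \<Rightarrow> 'm itself \<Rightarrow> 'n itself \<Rightarrow> bool" where
  "Rat_exact lm rm Dl eps (tk :: 'k itself) (tm :: 'm itself) (tn :: 'n itself) \<longleftrightarrow>
     (\<forall>(K :: ('k, 'c, 'r) rmod) (M :: ('m, 'c, 'r) rmod) (N :: ('n, 'c, 'r) rmod) u v.
        rmodule lm rm Dl eps K \<and> rmodule lm rm Dl eps M \<and> rmodule lm rm Dl eps N \<and>
        rmod_hom lm K M u \<and> rmod_hom lm M N v \<and>
        inj_on u (mcarrier K) \<and>
        u ` mcarrier K = {x \<in> mcarrier M. v x = mzero N} \<and>
        v ` mcarrier M = mcarrier N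
      \<longrightarrow>
        inj_on u (Rat lm eps K) \<and>
        u ` Rat lm eps K = {x \<in> Rat lm eps M. v x = mzero N} \<and>
        v ` Rat lm eps M = Rat lm eps N)"

end

theory Submission
  imports Defs
begin

text \<open>
  (i) \<longleftrightarrow> (ii): the identity eps (c \<cdot> g) = g c turns C-adic agreement into
  pointwise agreement, and c \<cdot> g only depends on g at the finitely many
  right tensor factors of Delta c.
  (ii) \<Longrightarrow> (iii): by finite density every rational m has a "local unit"
  t \<in> Rat(*C) with m \<cdot> t = m, and x \<cdot> t is rational for any x; this lifts
  rational elements along epimorphisms and pulls them back along monomorphisms.
  (iii) \<Longrightarrow> (i): for a finite F = {c_n} consider the epimorphism
  *C \<rightarrow> *C-orbit of (c_n)_n, h \<mapsto> (c_n \<cdot> h)_n, with its kernel.  The left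
  alpha-condition (a dual basis) shows that the image of any f is rational;
  exactness lifts it to a rational g with c_n \<cdot> g = c_n \<cdot> f.
\<close>

lemma sum_list_swap:
  fixes F :: "'a \<Rightarrow> 'b \<Rightarrow> 'c::comm_monoid_add"
  shows "(\<Sum>x\<leftarrow>xs. \<Sum>y\<leftarrow>ys. F x y) = (\<Sum>y\<leftarrow>ys. \<Sum>x\<leftarrow>xs. F x y)"
  by (induction xs) (simp_all add: sum_list_addf)

lemma sum_list_concat_map:
  "sum_list (map f (concat xss)) = (\<Sum>xs\<leftarrow>xss. sum_list (map f xs))"
  by (induction xss) simp_all

section \<open>Evaluating formal tensor sums\<close>

text \<open>The \<int>-linear extension of a map \<phi> on generators to finitely supported
  integer-valued formal sums; integer multiples are taken through the left
  action of R (so that no \<int>-module structure on C has to be assumed).\<close>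
definition lin_ext :: "('r::ring_1 \<Rightarrow> 'c::ab_group_add \<Rightarrow> 'c) \<Rightarrow> ('p \<Rightarrow> 'c) \<Rightarrow> ('p \<Rightarrow> int) \<Rightarrow> 'c" where
  "lin_ext lm \<phi> u = (\<Sum>p\<in>{p. u p \<noteq> 0}. lm (of_int (u p)) (\<phi> p))"

definition annihilated :: "('r::ring_1 \<Rightarrow> 'c::ab_group_add \<Rightarrow> 'c) \<Rightarrow> ('p \<Rightarrow> 'c) \<Rightarrow> ('p \<Rightarrow> int) set" where
  "annihilated lm \<phi> = {u. finite {p. u p \<noteq> 0} \<and> lin_ext lm \<phi> u = 0}"

locale R_bimodule =
  fixes lm :: "'r::ring_1 \<Rightarrow> 'c::ab_group_add \<Rightarrow> 'c"
    and rm :: "'c \<Rightarrow> 'r \<Rightarrow> 'c"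
  assumes bimodule: "bimodule lm rm"
begin

lemma lm_add: "lm r (a + b) = lm r a + lm r b" using bimodule unfolding bimodule_def by auto
lemma lm_radd: "lm (r + s) a = lm r a + lm s a" using bimodule unfolding bimodule_def by blast
lemma lm_one [simp]: "lm 1 a = a" using bimodule unfolding bimodule_def by blast
lemma rm_add: "rm (a + b) r = rm a r + rm b r" using bimodule unfolding bimodule_def by blast
lemma rm_radd: "rm a (r + s) = rm a r + rm a s" using bimodule unfolding bimodule_def by blast
lemma rm_mult: "rm a (r * s) = rm (rm a r) s" using bimodule unfolding bimodule_def by blast
lemma lm_rm: "rm (lm r a) s = lm r (rm a s)" using bimodule unfolding bimodule_def by blast

lemma lm_zero_left [simp]: "lm 0 a = 0"
  using lm_radd[of 0 0 a] by simp
lemma lm_zero [simp]: "lm r 0 = 0"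
  using lm_add[of r 0 0] by simp
lemma rm_zero_right [simp]: "rm a 0 = 0"
  using rm_radd[of a 0 0] by simp
lemma rm_zero [simp]: "rm 0 r = 0"
  using rm_add[of 0 0 r] by simp
lemma lm_uminus_left: "lm (- r) a = - lm r a"
  using lm_radd[of r "-r" a] by (simp add: eq_neg_iff_add_eq_0 add.commute)
lemma rm_uminus_right: "rm a (- r) = - rm a r"
  using rm_radd[of a r "-r"] by (simp add: eq_neg_iff_add_eq_0 add.commute)

lemma lm_sum_list: "lm r (sum_list xs) = sum_list (map (lm r) xs)"
  by (induction xs) (simp_all add: lm_add)
lemma rm_sum_list: "rm (sum_list xs) r = sum_list (map (\<lambda>x. rm x r) xs)"
  by (induction xs) (simp_all add: rm_add)
lemma rm_sum_list_right: "rm a (sum_list xs) = sum_list (map (rm a) xs)"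
  by (induction xs) (simp_all add: rm_radd)

lemma lin_ext_superset:
  assumes "finite S" "{p. u p \<noteq> 0} \<subseteq> S"
  shows "lin_ext lm \<phi> u = (\<Sum>p\<in>S. lm (of_int (u p)) (\<phi> p))"
  unfolding lin_ext_def by (rule sum.mono_neutral_left) (use assms in auto)

lemma lin_ext_add:
  assumes "finite {p. u p \<noteq> 0}" "finite {p. v p \<noteq> 0}"
  shows "lin_ext lm \<phi> (\<lambda>p. u p + v p) = lin_ext lm \<phi> u + lin_ext lm \<phi> v"
proof -
  let ?S = "{p. u p \<noteq> 0} \<union> {p. v p \<noteq> 0}"
  have "lin_ext lm \<phi> (\<lambda>p. u p + v p) = (\<Sum>p\<in>?S. lm (of_int (u p + v p)) (\<phi> p))"
    by (rule lin_ext_superset) (use assms in auto)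
  also have "\<dots> = (\<Sum>p\<in>?S. lm (of_int (u p)) (\<phi> p)) + (\<Sum>p\<in>?S. lm (of_int (v p)) (\<phi> p))"
    by (simp add: lm_radd sum.distrib)
  also have "\<dots> = lin_ext lm \<phi> u + lin_ext lm \<phi> v"
    using lin_ext_superset[of ?S u \<phi>] lin_ext_superset[of ?S v \<phi>] assms by auto
  finally show ?thesis .
qed

lemma lin_ext_uminus: "lin_ext lm \<phi> (\<lambda>p. - u p) = - lin_ext lm \<phi> u"
  unfolding lin_ext_def by (simp add: lm_uminus_left sum_negf)

lemma lin_ext_diff:
  assumes "finite {p. u p \<noteq> 0}" "finite {p. v p \<noteq> 0}"
  shows "lin_ext lm \<phi> (\<lambda>p. u p - v p) = lin_ext lm \<phi> u - lin_ext lm \<phi> v"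
  using lin_ext_add[of u "\<lambda>p. - v p" \<phi>] lin_ext_uminus[of \<phi> v] assms by simp

lemma finite_support_delta: "finite {p. delta x p \<noteq> 0}"
  by (rule finite_subset[of _ "{x}"]) (auto simp: delta_def)

lemma finite_support_diff:
  fixes u v :: "'p \<Rightarrow> int"
  shows "finite {p. u p \<noteq> 0} \<Longrightarrow> finite {p. v p \<noteq> 0} \<Longrightarrow> finite {p. u p - v p \<noteq> 0}"
  by (rule finite_subset[of _ "{p. u p \<noteq> 0} \<union> {p. v p \<noteq> 0}"]) auto

lemma lin_ext_delta: "lin_ext lm \<phi> (delta x) = \<phi> x"
  by (subst lin_ext_superset[of "{x}"]) (auto simp: delta_def)

lemma lin_ext_fs: "lin_ext lm \<phi> (fs xs) = sum_list (map \<phi> xs)"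
proof (induction xs)
  case Nil
  then show ?case by (simp add: lin_ext_def fs_def)
next
  case (Cons x xs)
  have "fs (x # xs) = (\<lambda>p. delta x p + fs xs p)"
    by (auto simp: fs_def delta_def)
  moreover have "finite {p. fs xs p \<noteq> 0}"
    by (rule finite_subset[of _ "set xs"]) (auto simp: fs_def count_list_0_iff)
  ultimately show ?case
    using lin_ext_add[OF finite_support_delta, of _ \<phi> x] Cons by (simp add: lin_ext_delta)
qed

lemma annihilated_zero: "(\<lambda>p. 0) \<in> annihilated lm \<phi>"
  by (simp add: annihilated_def lin_ext_def)

lemma annihilated_plus:
  assumes "u \<in> annihilated lm \<phi>" "v \<in> annihilated lm \<phi>"
  shows "(\<lambda>p. u p + v p) \<in> annihilated lm \<phi>"
proof -
  have "finite {p. u p + v p \<noteq> 0}"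
    by (rule finite_subset[of _ "{p. u p \<noteq> 0} \<union> {p. v p \<noteq> 0}"])
      (use assms in \<open>auto simp: annihilated_def\<close>)
  then show ?thesis using assms lin_ext_add[of u v \<phi>] by (simp add: annihilated_def)
qed

lemma annihilated_uminus: "u \<in> annihilated lm \<phi> \<Longrightarrow> (\<lambda>p. - u p) \<in> annihilated lm \<phi>"
  by (simp add: annihilated_def lin_ext_uminus)

lemma annihilated_balance:
  assumes "\<phi> X = \<phi> Y"
  shows "(\<lambda>p. delta X p - delta Y p) \<in> annihilated lm \<phi>"
proof -
  have "finite {p. delta X p - delta Y p \<noteq> 0}"
    by (intro finite_support_diff finite_support_delta)
  then show ?thesis
    using assms lin_ext_diff[OF finite_support_delta finite_support_delta, of \<phi> X Y]
    unfolding annihilated_def by (simp add: lin_ext_delta)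
qed

lemma annihilated_additivity:
  assumes "\<phi> X = \<phi> Y + \<phi> Z"
  shows "(\<lambda>p. delta X p - delta Y p - delta Z p) \<in> annihilated lm \<phi>"
proof -
  have fin: "finite {p. delta X p - delta Y p \<noteq> 0}"
    by (intro finite_support_diff finite_support_delta)
  have "lin_ext lm \<phi> (\<lambda>p. delta X p - delta Y p - delta Z p) = \<phi> X - \<phi> Y - \<phi> Z"
    using lin_ext_diff[OF fin finite_support_delta, of \<phi> Z]
      lin_ext_diff[OF finite_support_delta finite_support_delta, of \<phi> X Y]
    by (simp add: lin_ext_delta)
  then show ?thesis
    using assms finite_support_diff[OF fin finite_support_delta] by (simp add: annihilated_def)
qed

lemma annihilated_sum_list_eq:
  assumes "(\<lambda>p. fs xs p - fs ys p) \<in> annihilated lm \<phi>"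
  shows "sum_list (map \<phi> xs) = sum_list (map \<phi> ys)"
proof -
  have fin: "finite {p. fs zs p \<noteq> 0}" for zs :: "'p list"
    by (rule finite_subset[of _ "set zs"]) (auto simp: fs_def count_list_0_iff)
  show ?thesis
    using assms lin_ext_diff[OF fin fin, of \<phi> xs ys] by (simp add: annihilated_def lin_ext_fs)
qed

lemma teq2_sum:
  fixes \<phi> :: "'c \<times> 'c \<Rightarrow> 'c"
  assumes "teq2 lm rm xs ys"
    and "\<And>a a' b. \<phi> (a + a', b) = \<phi> (a, b) + \<phi> (a', b)"
    and "\<And>a b b'. \<phi> (a, b + b') = \<phi> (a, b) + \<phi> (a, b')"
    and "\<And>a r b. \<phi> (rm a r, b) = \<phi> (a, lm r b)"
  shows "sum_list (map \<phi> xs) = sum_list (map \<phi> ys)"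
proof (rule annihilated_sum_list_eq)
  have "u \<in> annihilated lm \<phi>" if "u \<in> tens2_rel lm rm" for u
    using that
    by induction (simp_all add: assms(2-4) annihilated_zero annihilated_plus annihilated_uminus
        annihilated_additivity annihilated_balance)
  then show "(\<lambda>p. fs xs p - fs ys p) \<in> annihilated lm \<phi>"
    using assms(1) unfolding teq2_def by blast
qed

lemma teq3_sum:
  fixes \<phi> :: "'c \<times> 'c \<times> 'c \<Rightarrow> 'c"
  assumes "teq3 lm rm xs ys"
    and "\<And>a a' b c. \<phi> (a + a', b, c) = \<phi> (a, b, c) + \<phi> (a', b, c)"
    and "\<And>a b b' c. \<phi> (a, b + b', c) = \<phi> (a, b, c) + \<phi> (a, b', c)"
    and "\<And>a b c c'. \<phi> (a, b, c + c') = \<phi> (a, b, c) + \<phi> (a, b, c')"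
    and "\<And>a r b c. \<phi> (rm a r, b, c) = \<phi> (a, lm r b, c)"
    and "\<And>a r b c. \<phi> (a, rm b r, c) = \<phi> (a, b, lm r c)"
  shows "sum_list (map \<phi> xs) = sum_list (map \<phi> ys)"
proof (rule annihilated_sum_list_eq)
  have "u \<in> annihilated lm \<phi>" if "u \<in> tens3_rel lm rm" for u
    using that
    by induction (simp_all add: assms(2-6) annihilated_zero annihilated_plus annihilated_uminus
        annihilated_additivity annihilated_balance)
  then show "(\<lambda>p. fs xs p - fs ys p) \<in> annihilated lm \<phi>"
    using assms(1) unfolding teq3_def by blast
qed

end

section \<open>The dual ring and its action on the coring\<close>

lemma ldual_add: "f \<in> ldual lm \<Longrightarrow> f (a + b) = f a + f b"
  unfolding ldual_def by blast
lemma ldual_lm: "f \<in> ldual lm \<Longrightarrow> f (lm r a) = r * f a"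
  unfolding ldual_def by blast
lemma ldual_zero: "f \<in> ldual lm \<Longrightarrow> f 0 = 0"
  using ldual_add[of f lm 0 0] by simp
lemma ldual_sum_list: "f \<in> ldual lm \<Longrightarrow> f (sum_list xs) = sum_list (map f xs)"
  by (induction xs) (simp_all add: ldual_add ldual_zero)

lemma zero_in_ldual: "(\<lambda>c. 0) \<in> ldual lm"
  unfolding ldual_def by simp
lemma add_in_ldual: "f \<in> ldual lm \<Longrightarrow> g \<in> ldual lm \<Longrightarrow> (\<lambda>c. f c + g c) \<in> ldual lm"
  unfolding ldual_def by (simp add: algebra_simps)
lemma uminus_in_ldual: "f \<in> ldual lm \<Longrightarrow> (\<lambda>c. - f c) \<in> ldual lm"
  unfolding ldual_def by simp

locale R_coring =
  fixes lm :: "'r::ring_1 \<Rightarrow> 'c::ab_group_add \<Rightarrow> 'c"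
    and rm :: "'c \<Rightarrow> 'r \<Rightarrow> 'c"
    and Dl :: "'c \<Rightarrow> ('c \<times> 'c) list"
    and eps :: "'c \<Rightarrow> 'r"
  assumes coring: "coring lm rm Dl eps"
begin

sublocale R_bimodule lm rm
  using coring unfolding coring_def by unfold_locales blast

lemma Dl_add: "teq2 lm rm (Dl (c + d)) (Dl c @ Dl d)"
  using coring unfolding coring_def by blast
lemma Dl_lm: "teq2 lm rm (Dl (lm r c)) (map (\<lambda>(a, b). (lm r a, b)) (Dl c))"
  using coring unfolding coring_def by blast
lemma Dl_rm: "teq2 lm rm (Dl (rm c r)) (map (\<lambda>(a, b). (a, rm b r)) (Dl c))"
  using coring unfolding coring_def by blast
lemma eps_add: "eps (c + d) = eps c + eps d"
  using coring unfolding coring_def by blast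
lemma eps_lm: "eps (lm r c) = r * eps c"
  using coring unfolding coring_def by blast
lemma eps_rm: "eps (rm c r) = eps c * r"
  using coring unfolding coring_def by blast
lemma coassoc: "teq3 lm rm
        (concat (map (\<lambda>(a, b). map (\<lambda>(x, y). (x, y, b)) (Dl a)) (Dl c)))
        (concat (map (\<lambda>(a, b). map (\<lambda>(x, y). (a, x, y)) (Dl b)) (Dl c)))"
  using coring unfolding coring_def by blast
lemma counit_left: "(\<Sum>(a, b)\<leftarrow>Dl c. lm (eps a) b) = c"
  using coring unfolding coring_def by blast
lemma counit_right: "(\<Sum>(a, b)\<leftarrow>Dl c. rm a (eps b)) = c"
  using coring unfolding coring_def by blast

lemma eps_in_ldual: "eps \<in> ldual lm"
  unfolding ldual_def by (simp add: eps_add eps_lm)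

lemma eps_mult_in_ldual: "(\<lambda>c. eps c * r) \<in> ldual lm"
  unfolding ldual_def by (simp add: eps_add eps_lm algebra_simps)

text \<open>For g \<in> *C the map (a, b) \<mapsto> a g(b) is biadditive and balanced, hence
  c \<mapsto> c \<cdot> g transports the bimodule-map axioms of Delta.\<close>
lemma teq2_cact_sum:
  assumes g: "g \<in> ldual lm" and "teq2 lm rm xs ys"
  shows "(\<Sum>(a, b)\<leftarrow>xs. rm a (g b)) = (\<Sum>(a, b)\<leftarrow>ys. rm a (g b))"
  by (rule teq2_sum[OF assms(2)])
    (simp_all add: rm_add rm_radd ldual_add[OF g] ldual_lm[OF g] rm_mult[symmetric])

lemma cact_add:
  assumes g: "g \<in> ldual lm"
  shows "cact rm Dl (c + d) g = cact rm Dl c g + cact rm Dl d g"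
  using teq2_cact_sum[OF g Dl_add] by (simp add: cact_def)

lemma cact_zero: "g \<in> ldual lm \<Longrightarrow> cact rm Dl 0 g = 0"
  using cact_add[of g 0 0] by simp

lemma cact_sum_list:
  "g \<in> ldual lm \<Longrightarrow> cact rm Dl (sum_list xs) g = (\<Sum>x\<leftarrow>xs. cact rm Dl x g)"
  by (induction xs) (simp_all add: cact_add cact_zero)

lemma cact_lm:
  assumes g: "g \<in> ldual lm"
  shows "cact rm Dl (lm r c) g = lm r (cact rm Dl c g)"
  using teq2_cact_sum[OF g Dl_lm]
  by (simp add: cact_def lm_sum_list case_prod_unfold o_def lm_rm)

lemma cact_rm:
  assumes g: "g \<in> ldual lm"
  shows "cact rm Dl (rm c r) g = (\<Sum>(a, b)\<leftarrow>Dl c. rm a (g (rm b r)))"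
  using teq2_cact_sum[OF g Dl_rm] by (simp add: cact_def case_prod_unfold o_def)

lemma cact_fun_add: "cact rm Dl c (\<lambda>x. f x + g x) = cact rm Dl c f + cact rm Dl c g"
  unfolding cact_def by (simp add: case_prod_unfold rm_radd sum_list_addf)

lemma cact_fun_zero: "cact rm Dl c (\<lambda>x. 0) = 0"
  unfolding cact_def by (simp add: case_prod_unfold)

lemma cact_fun_uminus: "cact rm Dl c (\<lambda>x. - f x) = - cact rm Dl c f"
  unfolding cact_def by (simp add: case_prod_unfold rm_uminus_right uminus_sum_list_map o_def)

lemma cact_eps: "cact rm Dl c eps = c"
  unfolding cact_def using counit_right .

lemma cact_eps_mult: "cact rm Dl c (\<lambda>x. eps x * r) = rm c r"
proof -
  have "cact rm Dl c (\<lambda>x. eps x * r) = (\<Sum>x\<leftarrow>map (\<lambda>(a, b). rm a (eps b)) (Dl c). rm x r)"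
    unfolding cact_def by (simp add: case_prod_unfold o_def rm_mult)
  also have "\<dots> = rm c r"
    by (simp only: rm_sum_list[symmetric] counit_right)
  finally show ?thesis .
qed

lemma eps_cact:
  assumes g: "g \<in> ldual lm"
  shows "eps (cact rm Dl c g) = g c"
proof -
  have "eps (cact rm Dl c g) = (\<Sum>(a, b)\<leftarrow>Dl c. eps a * g b)"
    unfolding cact_def by (simp add: ldual_sum_list[OF eps_in_ldual] case_prod_unfold o_def eps_rm)
  also have "\<dots> = g (\<Sum>(a, b)\<leftarrow>Dl c. lm (eps a) b)"
    by (simp add: ldual_sum_list[OF g] case_prod_unfold o_def ldual_lm[OF g])
  also have "\<dots> = g c" by (simp only: counit_left)
  finally show ?thesis .
qed

lemma conv_in_ldual:
  assumes f: "f \<in> ldual lm" and g: "g \<in> ldual lm"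
  shows "conv rm Dl f g \<in> ldual lm"
  unfolding ldual_def conv_def
  by (simp add: cact_add[OF f] cact_lm[OF f] ldual_add[OF g] ldual_lm[OF g])

text \<open>C is a right *C-module: (c \<cdot> f) \<cdot> g = c \<cdot> (f # g).  This is where
  coassociativity enters.\<close>
lemma cact_conv:
  assumes f: "f \<in> ldual lm" and g: "g \<in> ldual lm"
  shows "cact rm Dl (cact rm Dl c f) g = cact rm Dl c (conv rm Dl f g)"
proof -
  define \<Psi> where "\<Psi> = (\<lambda>(x::'c, y::'c, z::'c). rm x (g (rm y (f z))))"
  have "cact rm Dl (cact rm Dl c f) g = (\<Sum>(a, b)\<leftarrow>Dl c. \<Sum>(x, y)\<leftarrow>Dl a. rm x (g (rm y (f b))))"
    unfolding cact_def[of rm Dl c f] by (simp add: cact_sum_list[OF g] o_def case_prod_unfold cact_rm[OF g])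
  also have "\<dots> = sum_list (map \<Psi> (concat (map (\<lambda>(a, b). map (\<lambda>(x, y). (x, y, b)) (Dl a)) (Dl c))))"
    by (simp add: sum_list_concat_map \<Psi>_def o_def case_prod_unfold)
  also have "\<dots> = sum_list (map \<Psi> (concat (map (\<lambda>(a, b). map (\<lambda>(x, y). (a, x, y)) (Dl b)) (Dl c))))"
    by (rule teq3_sum[OF coassoc])
      (simp_all add: \<Psi>_def rm_add rm_radd ldual_add[OF g] ldual_add[OF f] ldual_lm[OF g]
        ldual_lm[OF f] rm_mult[symmetric] lm_rm)
  also have "\<dots> = (\<Sum>(a, b)\<leftarrow>Dl c. \<Sum>(x, y)\<leftarrow>Dl b. rm a (g (rm x (f y))))"
    by (simp add: sum_list_concat_map \<Psi>_def o_def case_prod_unfold)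
  also have "\<dots> = cact rm Dl c (conv rm Dl f g)"
    unfolding cact_def[of rm Dl c] conv_def cact_def[of rm Dl _ f]
    by (simp add: ldual_sum_list[OF g] rm_sum_list_right o_def case_prod_unfold)
  finally show ?thesis .
qed

lemma conv_add_left:
  assumes "a \<in> ldual lm" "b \<in> ldual lm" "f \<in> ldual lm"
  shows "conv rm Dl (\<lambda>c. a c + b c) f = (\<lambda>c. conv rm Dl a f c + conv rm Dl b f c)"
  using assms by (simp add: conv_def cact_fun_add ldual_add fun_eq_iff)

lemma conv_add_right: "conv rm Dl a (\<lambda>c. f c + g c) = (\<lambda>c. conv rm Dl a f c + conv rm Dl a g c)"
  by (simp add: conv_def)

lemma conv_assoc:
  assumes "a \<in> ldual lm" "f \<in> ldual lm" "g \<in> ldual lm"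
  shows "conv rm Dl a (conv rm Dl f g) = conv rm Dl (conv rm Dl a f) g"
  using assms cact_conv[unfolded conv_def] by (simp add: conv_def fun_eq_iff)

lemma conv_eps: "a \<in> ldual lm \<Longrightarrow> conv rm Dl a eps = a"
  by (simp add: conv_def eps_cact fun_eq_iff)

section \<open>Right *C-modules and their rational parts\<close>

context
  fixes M :: "('m, 'c, 'r) rmod"
  assumes M: "rmodule lm rm Dl eps M"
begin

lemma rmod_zero_in: "mzero M \<in> mcarrier M"
  using M unfolding rmodule_def by blast
lemma rmod_add_in: "x \<in> mcarrier M \<Longrightarrow> y \<in> mcarrier M \<Longrightarrow> madd M x y \<in> mcarrier M"
  using M unfolding rmodule_def by auto
lemma rmod_neg_in: "x \<in> mcarrier M \<Longrightarrow> mneg M x \<in> mcarrier M"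
  using M unfolding rmodule_def by blast
lemma rmod_assoc: "x \<in> mcarrier M \<Longrightarrow> y \<in> mcarrier M \<Longrightarrow> z \<in> mcarrier M \<Longrightarrow>
    madd M (madd M x y) z = madd M x (madd M y z)"
  using M unfolding rmodule_def by blast
lemma rmod_comm: "x \<in> mcarrier M \<Longrightarrow> y \<in> mcarrier M \<Longrightarrow> madd M x y = madd M y x"
  using M unfolding rmodule_def by blast
lemma rmod_zero_add: "x \<in> mcarrier M \<Longrightarrow> madd M (mzero M) x = x"
  using M unfolding rmodule_def by blast
lemma rmod_neg_add: "x \<in> mcarrier M \<Longrightarrow> madd M (mneg M x) x = mzero M"
  using M unfolding rmodule_def by blast
lemma rmod_act_in: "x \<in> mcarrier M \<Longrightarrow> f \<in> ldual lm \<Longrightarrow> mact M x f \<in> mcarrier M"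
  using M unfolding rmodule_def by blast
lemma rmod_act_add: "x \<in> mcarrier M \<Longrightarrow> y \<in> mcarrier M \<Longrightarrow> f \<in> ldual lm \<Longrightarrow>
    mact M (madd M x y) f = madd M (mact M x f) (mact M y f)"
  using M unfolding rmodule_def by blast
lemma rmod_act_fun_add: "x \<in> mcarrier M \<Longrightarrow> f \<in> ldual lm \<Longrightarrow> g \<in> ldual lm \<Longrightarrow>
    mact M x (\<lambda>c. f c + g c) = madd M (mact M x f) (mact M x g)"
  using M unfolding rmodule_def by blast
lemma rmod_act_conv: "x \<in> mcarrier M \<Longrightarrow> f \<in> ldual lm \<Longrightarrow> g \<in> ldual lm \<Longrightarrow>
    mact M x (conv rm Dl f g) = mact M (mact M x f) g"
  using M unfolding rmodule_def by blast
lemma rmod_act_eps: "x \<in> mcarrier M \<Longrightarrow> mact M x eps = x"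
  using M unfolding rmodule_def by blast

lemma rmod_idem_zero:
  assumes x: "x \<in> mcarrier M" and idem: "madd M x x = x"
  shows "x = mzero M"
proof -
  have "x = madd M (madd M (mneg M x) x) x" using rmod_neg_add[OF x] rmod_zero_add[OF x] by simp
  also have "\<dots> = madd M (mneg M x) (madd M x x)" using rmod_assoc rmod_neg_in x by blast
  also have "\<dots> = mzero M" using idem rmod_neg_add[OF x] by simp
  finally show ?thesis .
qed

lemma rmod_act_fun_zero:
  assumes x: "x \<in> mcarrier M"
  shows "mact M x (\<lambda>c. 0) = mzero M"
  using rmod_act_fun_add[OF x zero_in_ldual zero_in_ldual]
  by (intro rmod_idem_zero rmod_act_in[OF x zero_in_ldual]) simp

lemma msum_in: "set xs \<subseteq> mcarrier M \<Longrightarrow> msum M xs \<in> mcarrier M"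
  by (induction xs) (auto simp: msum_def rmod_zero_in rmod_add_in)

lemma rmod_act_sum:
  assumes x: "x \<in> mcarrier M"
  shows "set gs \<subseteq> ldual lm \<Longrightarrow>
    mact M x (foldr (\<lambda>f g c. f c + g c) gs (\<lambda>c. 0)) = msum M (map (mact M x) gs)
    \<and> foldr (\<lambda>f g c. f c + g c) gs (\<lambda>c. 0) \<in> ldual lm"
  by (induction gs) (simp_all add: msum_def rmod_act_fun_zero[OF x] zero_in_ldual
      rmod_act_fun_add[OF x] add_in_ldual)

end

lemma hom_zero:
  assumes M: "rmodule lm rm Dl eps M" and N: "rmodule lm rm Dl eps N" and h: "rmod_hom lm M N h"
  shows "h (mzero M) = mzero N"
proof -
  have in_N: "h (mzero M) \<in> mcarrier N" using h rmod_zero_in[OF M] unfolding rmod_hom_def by blast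
  have "h (mzero M) = h (madd M (mzero M) (mzero M))" using rmod_zero_add[OF M rmod_zero_in[OF M]] by simp
  also have "\<dots> = madd N (h (mzero M)) (h (mzero M))"
    using h rmod_zero_in[OF M] unfolding rmod_hom_def by blast
  finally show ?thesis using rmod_idem_zero[OF N in_N] by simp
qed

lemma hom_msum:
  assumes M: "rmodule lm rm Dl eps M" and N: "rmodule lm rm Dl eps N" and h: "rmod_hom lm M N h"
  shows "set xs \<subseteq> mcarrier M \<Longrightarrow> h (msum M xs) = msum N (map h xs)"
proof (induction xs)
  case Nil then show ?case using hom_zero[OF M N h] by (simp add: msum_def)
next
  case (Cons x xs)
  have "h (msum M (x # xs)) = h (madd M x (msum M xs))" by (simp add: msum_def)
  also have "\<dots> = madd N (h x) (h (msum M xs))"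
    using h Cons.prems msum_in[OF M, of xs] unfolding rmod_hom_def by auto
  finally show ?case using Cons by (simp add: msum_def)
qed

lemma hom_act: "rmod_hom lm M N h \<Longrightarrow> x \<in> mcarrier M \<Longrightarrow> f \<in> ldual lm \<Longrightarrow>
    h (mact M x f) = mact N (h x) f"
  unfolding rmod_hom_def by blast

lemma sub_rmodule:
  assumes M: "rmodule lm rm Dl eps M" and S: "S \<subseteq> mcarrier M" "mzero M \<in> S"
    "\<And>x y. x \<in> S \<Longrightarrow> y \<in> S \<Longrightarrow> madd M x y \<in> S" "\<And>x. x \<in> S \<Longrightarrow> mneg M x \<in> S"
    "\<And>x f. x \<in> S \<Longrightarrow> f \<in> ldual lm \<Longrightarrow> mact M x f \<in> S"
  shows "rmodule lm rm Dl eps (M\<lparr>mcarrier := S\<rparr>)"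
proof -
  have sel: "mcarrier (M\<lparr>mcarrier := S\<rparr>) = S" "madd (M\<lparr>mcarrier := S\<rparr>) = madd M"
    "mzero (M\<lparr>mcarrier := S\<rparr>) = mzero M" "mneg (M\<lparr>mcarrier := S\<rparr>) = mneg M"
    "mact (M\<lparr>mcarrier := S\<rparr>) = mact M" by simp_all
  show ?thesis
    unfolding rmodule_def sel
    by (intro conjI ballI)
      (auto simp: S subsetD[OF S(1)] rmod_assoc[OF M] rmod_zero_add[OF M] rmod_neg_add[OF M]
        rmod_act_add[OF M] rmod_act_fun_add[OF M] rmod_act_conv[OF M] rmod_act_eps[OF M]
        intro: rmod_comm[OF M])
qed

lemma Rat_dual_iff:
  "t \<in> Rat lm eps (dual_rmod lm rm Dl) \<longleftrightarrow> t \<in> ldual lm \<and> (\<exists>ps :: (('c \<Rightarrow> 'r) \<times> 'c) list.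
      (\<forall>(ti, ci) \<in> set ps. ti \<in> ldual lm) \<and>
      (\<forall>f \<in> ldual lm. conv rm Dl t f =
          foldr (\<lambda>f g c. f c + g c) (map (\<lambda>(ti, ci). conv rm Dl ti (\<lambda>c. eps c * f ci)) ps) (\<lambda>c. 0)))"
  unfolding Rat_def by (simp add: dual_rmod_def msum_def)

lemma Rat_dual_in_ldual: "t \<in> Rat lm eps (dual_rmod lm rm Dl) \<Longrightarrow> t \<in> ldual lm"
  unfolding Rat_dual_iff by blast

lemma Rat_hom:
  assumes M: "rmodule lm rm Dl eps M" and N: "rmodule lm rm Dl eps N" and h: "rmod_hom lm M N h"
    and m: "m \<in> Rat lm eps M"
  shows "h m \<in> Rat lm eps N"
proof -
  obtain ps where mc: "m \<in> mcarrier M" and ps: "\<forall>(mi, ci) \<in> set ps. mi \<in> mcarrier M"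
    and eq: "\<forall>f \<in> ldual lm. mact M m f = msum M (map (\<lambda>(mi, ci). mact M mi (\<lambda>c. eps c * f ci)) ps)"
    using m unfolding Rat_def by blast
  have hc: "\<And>x. x \<in> mcarrier M \<Longrightarrow> h x \<in> mcarrier N"
    using h unfolding rmod_hom_def by blast
  let ?ps = "map (\<lambda>(mi, ci). (h mi, ci)) ps"
  have "mact N (h m) f = msum N (map (\<lambda>(mi, ci). mact N mi (\<lambda>c. eps c * f ci)) ?ps)"
    if f: "f \<in> ldual lm" for f
  proof -
    have "mact N (h m) f = h (msum M (map (\<lambda>(mi, ci). mact M mi (\<lambda>c. eps c * f ci)) ps))"
      using hom_act[OF h mc f] eq f by simp
    also have "\<dots> = msum N (map h (map (\<lambda>(mi, ci). mact M mi (\<lambda>c. eps c * f ci)) ps))"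
      by (rule hom_msum[OF M N h]) (use ps rmod_act_in[OF M] eps_mult_in_ldual in auto)
    also have "map h (map (\<lambda>(mi, ci). mact M mi (\<lambda>c. eps c * f ci)) ps)
        = map (\<lambda>(mi, ci). mact N mi (\<lambda>c. eps c * f ci)) ?ps"
      using ps hom_act[OF h] eps_mult_in_ldual by (auto simp: case_prod_unfold)
    finally show ?thesis .
  qed
  moreover have "\<forall>(mi, ci) \<in> set ?ps. mi \<in> mcarrier N" using ps hc by auto
  ultimately show ?thesis using hc[OF mc] unfolding Rat_def by blast
qed

lemma Rat_act_rational:
  assumes M: "rmodule lm rm Dl eps M" and x: "x \<in> mcarrier M"
    and t: "t \<in> Rat lm eps (dual_rmod lm rm Dl)"
  shows "mact M x t \<in> Rat lm eps M"
proof -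
  obtain ps :: "(('c \<Rightarrow> 'r) \<times> 'c) list" where tl: "t \<in> ldual lm"
    and ps: "\<forall>(ti, ci) \<in> set ps. ti \<in> ldual lm"
    and eq: "\<forall>f \<in> ldual lm. conv rm Dl t f =
          foldr (\<lambda>f g c. f c + g c) (map (\<lambda>(ti, ci). conv rm Dl ti (\<lambda>c. eps c * f ci)) ps) (\<lambda>c. 0)"
    using t unfolding Rat_dual_iff by blast
  let ?ps = "map (\<lambda>(ti, ci). (mact M x ti, ci)) ps"
  have "mact M (mact M x t) f = msum M (map (\<lambda>(mi, ci). mact M mi (\<lambda>c. eps c * f ci)) ?ps)"
    if f: "f \<in> ldual lm" for f
  proof -
    have sub: "set (map (\<lambda>(ti, ci). conv rm Dl ti (\<lambda>c. eps c * f ci)) ps) \<subseteq> ldual lm"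
      using ps conv_in_ldual eps_mult_in_ldual by auto
    have "mact M (mact M x t) f = mact M x (conv rm Dl t f)"
      using rmod_act_conv[OF M x tl f] by simp
    also have "\<dots> = msum M (map (mact M x) (map (\<lambda>(ti, ci). conv rm Dl ti (\<lambda>c. eps c * f ci)) ps))"
      using eq f rmod_act_sum[OF M x sub] by simp
    also have "map (mact M x) (map (\<lambda>(ti, ci). conv rm Dl ti (\<lambda>c. eps c * f ci)) ps)
       = map (\<lambda>(mi, ci). mact M mi (\<lambda>c. eps c * f ci)) ?ps"
      using ps rmod_act_conv[OF M x] eps_mult_in_ldual by (auto simp: case_prod_unfold)
    finally show ?thesis .
  qed
  moreover have "\<forall>(mi, ci) \<in> set ?ps. mi \<in> mcarrier M" using ps rmod_act_in[OF M x] by auto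
  ultimately show ?thesis using rmod_act_in[OF M x tl] unfolding Rat_def by blast
qed

text \<open>Local units: if Rat(*C) is dense in the finite topology, every rational m
  is fixed by some t \<in> Rat(*C) (take t agreeing with eps on the finitely many
  coring elements of a rationality witness of m).\<close>
lemma Rat_local_unit:
  assumes M: "rmodule lm rm Dl eps M" and m: "m \<in> Rat lm eps M"
    and dense: "dense_finite_top lm (Rat lm eps (dual_rmod lm rm Dl))"
  shows "\<exists>t \<in> Rat lm eps (dual_rmod lm rm Dl). mact M m t = m"
proof -
  obtain ps where mc: "m \<in> mcarrier M"
    and eq: "\<forall>f \<in> ldual lm. mact M m f = msum M (map (\<lambda>(mi, ci). mact M mi (\<lambda>c. eps c * f ci)) ps)"
    using m unfolding Rat_def by blast
  obtain t where t: "t \<in> Rat lm eps (dual_rmod lm rm Dl)" and te: "\<forall>c \<in> snd ` set ps. t c = eps c"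
    using dense eps_in_ldual unfolding dense_finite_top_def by blast
  have "mact M m t = msum M (map (\<lambda>(mi, ci). mact M mi (\<lambda>c. eps c * t ci)) ps)"
    using eq Rat_dual_in_ldual[OF t] by blast
  also have "\<dots> = msum M (map (\<lambda>(mi, ci). mact M mi (\<lambda>c. eps c * eps ci)) ps)"
    using te by (auto simp: case_prod_unfold intro!: arg_cong[where f = "msum M"])
  also have "\<dots> = m" using eq eps_in_ldual rmod_act_eps[OF M mc] by simp
  finally show ?thesis using t by blast
qed

section \<open>The two topologies give the same density\<close>

text \<open>C-adic agreement on F implies pointwise agreement on F, by eps (c \<cdot> g) = g c.\<close>
lemma dense_Cadic_imp_finite:
  assumes dense: "dense_Cadic_top lm rm Dl S" and S: "S \<subseteq> ldual lm"
  shows "dense_finite_top lm S"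
  unfolding dense_finite_top_def
proof (intro ballI allI impI)
  fix f F assume f: "f \<in> ldual lm" and F: "finite (F :: 'c set)"
  obtain g where g: "g \<in> S" and agree: "\<forall>c\<in>F. cact rm Dl c g = cact rm Dl c f"
    using dense f F unfolding dense_Cadic_top_def by blast
  have "g \<in> ldual lm" using g S by blast
  then have "\<forall>c\<in>F. g c = f c"
    using agree eps_cact[OF f] by (metis eps_cact)
  then show "\<exists>g \<in> S. \<forall>c\<in>F. g c = f c" using g by blast
qed

text \<open>c \<cdot> g only depends on the values of g at the right tensor factors of
  Delta c, so pointwise agreement on finitely many of them suffices.\<close>
lemma dense_finite_imp_Cadic:
  assumes dense: "dense_finite_top lm S"
  shows "dense_Cadic_top lm rm Dl S"
  unfolding dense_Cadic_top_def
proof (intro ballI allI impI)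
  fix f F assume f: "f \<in> ldual lm" and F: "finite (F :: 'c set)"
  have "finite (\<Union>c\<in>F. snd ` set (Dl c))" using F by auto
  then obtain g where g: "g \<in> S" and agree: "\<forall>c \<in> (\<Union>c\<in>F. snd ` set (Dl c)). g c = f c"
    using dense f unfolding dense_finite_top_def by blast
  have "cact rm Dl c g = cact rm Dl c f" if c: "c \<in> F" for c
  proof -
    have "g b = f b" if "(a, b) \<in> set (Dl c)" for a b
      using agree c that by force
    then show ?thesis
      unfolding cact_def by (intro arg_cong[where f = sum_list] map_cong) auto
  qed
  then show "\<exists>g \<in> S. \<forall>c\<in>F. cact rm Dl c g = cact rm Dl c f" using g by blast
qed

section \<open>Density implies exactness\<close>

lemma Rat_preimage_mono:
  assumes dense: "dense_finite_top lm (Rat lm eps (dual_rmod lm rm Dl))"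
    and K: "rmodule lm rm Dl eps K" and M: "rmodule lm rm Dl eps M"
    and u: "rmod_hom lm K M u" and inj: "inj_on u (mcarrier K)"
    and x: "x \<in> Rat lm eps M" and k: "k \<in> mcarrier K" "x = u k"
  shows "x \<in> u ` Rat lm eps K"
proof -
  obtain t where t: "t \<in> Rat lm eps (dual_rmod lm rm Dl)" and xt: "mact M x t = x"
    using Rat_local_unit[OF M x dense] by blast
  have kt: "mact K k t \<in> Rat lm eps K" using Rat_act_rational[OF K k(1) t] .
  have "u (mact K k t) = u k" using hom_act[OF u k(1) Rat_dual_in_ldual[OF t]] xt k by simp
  moreover have "mact K k t \<in> mcarrier K"
    using rmod_act_in[OF K k(1) Rat_dual_in_ldual[OF t]] .
  ultimately have "mact K k t = k"
    using inj k(1) by (simp add: inj_on_eq_iff)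
  then show ?thesis using kt k by (metis image_eqI)
qed

lemma Rat_preimage_epi:
  assumes dense: "dense_finite_top lm (Rat lm eps (dual_rmod lm rm Dl))"
    and M: "rmodule lm rm Dl eps M" and N: "rmodule lm rm Dl eps N" and v: "rmod_hom lm M N v"
    and n: "n \<in> Rat lm eps N" and x: "x \<in> mcarrier M" "n = v x"
  shows "n \<in> v ` Rat lm eps M"
proof -
  obtain t where t: "t \<in> Rat lm eps (dual_rmod lm rm Dl)" and nt: "mact N n t = n"
    using Rat_local_unit[OF N n dense] by blast
  have "mact M x t \<in> Rat lm eps M" using Rat_act_rational[OF M x(1) t] .
  moreover have "v (mact M x t) = n" using hom_act[OF v x(1) Rat_dual_in_ldual[OF t]] x nt by simp
  ultimately show ?thesis by force
qed

text \<open>(ii) \<Longrightarrow> (iii).  Rat is always left exact; density supplies the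
  missing preimages in the rational parts.\<close>
theorem dense_imp_Rat_exact:
  assumes dense: "dense_finite_top lm (Rat lm eps (dual_rmod lm rm Dl))"
  shows "Rat_exact lm rm Dl eps TYPE('k) TYPE('m) TYPE('n)"
  unfolding Rat_exact_def
proof (intro allI impI, elim conjE, intro conjI)
  fix K :: "('k, 'c, 'r) rmod" and M :: "('m, 'c, 'r) rmod" and N :: "('n, 'c, 'r) rmod" and u v
  assume K: "rmodule lm rm Dl eps K" and M: "rmodule lm rm Dl eps M" and N: "rmodule lm rm Dl eps N"
    and u: "rmod_hom lm K M u" and v: "rmod_hom lm M N v" and inj: "inj_on u (mcarrier K)"
    and ker: "u ` mcarrier K = {x \<in> mcarrier M. v x = mzero N}"
    and surj: "v ` mcarrier M = mcarrier N"
  have Rat_sub: "Rat lm eps L \<subseteq> mcarrier L" for L :: "('l, 'c, 'r) rmod"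
    unfolding Rat_def by auto
  show "inj_on u (Rat lm eps K)" by (rule inj_on_subset[OF inj Rat_sub])
  show "u ` Rat lm eps K = {x \<in> Rat lm eps M. v x = mzero N}"
  proof (intro equalityI subsetI)
    fix x assume "x \<in> u ` Rat lm eps K"
    then obtain k where k: "k \<in> Rat lm eps K" "x = u k" by blast
    then have "u k \<in> u ` mcarrier K" using Rat_sub[of K] by blast
    then show "x \<in> {x \<in> Rat lm eps M. v x = mzero N}"
      using Rat_hom[OF K M u k(1)] k(2) ker by simp
  next
    fix x assume x: "x \<in> {x \<in> Rat lm eps M. v x = mzero N}"
    then have "x \<in> u ` mcarrier K" using ker Rat_sub[of M] by blast
    then obtain k where "k \<in> mcarrier K" "x = u k" by blast
    then show "x \<in> u ` Rat lm eps K"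
      using Rat_preimage_mono[OF dense K M u inj] x by blast
  qed
  show "v ` Rat lm eps M = Rat lm eps N"
  proof (intro equalityI subsetI)
    fix n assume "n \<in> v ` Rat lm eps M"
    then show "n \<in> Rat lm eps N" using Rat_hom[OF M N v] by blast
  next
    fix n assume n: "n \<in> Rat lm eps N"
    then have "n \<in> v ` mcarrier M" using surj Rat_sub[of N] by blast
    then obtain x where "x \<in> mcarrier M" "n = v x" by blast
    then show "n \<in> v ` Rat lm eps M" using Rat_preimage_epi[OF dense M N v n] by blast
  qed
qed

end


section \<open>Exactness implies density\<close>

text \<open>To test exactness of Rat on a finite set F = {cs n} we need three modules
  in the single type of sequences of pairs (functional, coring element):
  *C placed as constant sequences (h, 0), the orbit {(c_n \<cdot> h)_n} of the
  sequence cs, and the kernel of h \<mapsto> (c_n \<cdot> h)_n.\<close>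

definition seq_add :: "(nat \<Rightarrow> ('c::ab_group_add \<Rightarrow> 'r::ring_1) \<times> 'c) \<Rightarrow> (nat \<Rightarrow> ('c \<Rightarrow> 'r) \<times> 'c)
    \<Rightarrow> (nat \<Rightarrow> ('c \<Rightarrow> 'r) \<times> 'c)" where
  "seq_add x y = (\<lambda>n. ((\<lambda>c. fst (x n) c + fst (y n) c), snd (x n) + snd (y n)))"

definition seq_zero :: "nat \<Rightarrow> ('c::ab_group_add \<Rightarrow> 'r::ring_1) \<times> 'c" where
  "seq_zero = (\<lambda>n. ((\<lambda>c. 0), 0))"

definition seq_neg :: "(nat \<Rightarrow> ('c::ab_group_add \<Rightarrow> 'r::ring_1) \<times> 'c) \<Rightarrow> (nat \<Rightarrow> ('c \<Rightarrow> 'r) \<times> 'c)" where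
  "seq_neg x = (\<lambda>n. ((\<lambda>c. - fst (x n) c), - snd (x n)))"

definition const_seq :: "('c::ab_group_add \<Rightarrow> 'r::ring_1) \<Rightarrow> (nat \<Rightarrow> ('c \<Rightarrow> 'r) \<times> 'c)" where
  "const_seq h = (\<lambda>n. (h, 0))"

lemma seq_add_const: "seq_add (const_seq a) (const_seq b) = const_seq (\<lambda>c. a c + b c)"
  by (simp add: seq_add_def const_seq_def)
lemma seq_neg_const: "seq_neg (const_seq a) = const_seq (\<lambda>c. - a c)"
  by (simp add: seq_neg_def const_seq_def)
lemma seq_zero_const: "seq_zero = const_seq (\<lambda>c. 0)"
  by (simp add: seq_zero_def const_seq_def)
lemma fst_const_seq [simp]: "fst (const_seq a n) = a"
  by (simp add: const_seq_def)
lemma const_seq_eq_iff: "const_seq a = const_seq b \<longleftrightarrow> a = b"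
  by (auto simp: const_seq_def fun_eq_iff)

context R_coring
begin

definition orbit_seq :: "(nat \<Rightarrow> 'c) \<Rightarrow> ('c \<Rightarrow> 'r) \<Rightarrow> (nat \<Rightarrow> ('c \<Rightarrow> 'r) \<times> 'c)" where
  "orbit_seq cs h = (\<lambda>n. ((\<lambda>c. 0), cact rm Dl (cs n) h))"

definition dual_seq_mod :: "(nat \<Rightarrow> ('c \<Rightarrow> 'r) \<times> 'c, 'c, 'r) rmod" where
  "dual_seq_mod = \<lparr>mcarrier = const_seq ` ldual lm, madd = seq_add, mzero = seq_zero, mneg = seq_neg,
     mact = (\<lambda>x g. const_seq (conv rm Dl (fst (x 0)) g))\<rparr>"

definition orbit_mod :: "(nat \<Rightarrow> 'c) \<Rightarrow> (nat \<Rightarrow> ('c \<Rightarrow> 'r) \<times> 'c, 'c, 'r) rmod" where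
  "orbit_mod cs = \<lparr>mcarrier = orbit_seq cs ` ldual lm, madd = seq_add, mzero = seq_zero,
     mneg = seq_neg, mact = (\<lambda>x g n. ((\<lambda>c. 0), cact rm Dl (snd (x n)) g))\<rparr>"

definition orbit_map :: "(nat \<Rightarrow> 'c) \<Rightarrow> (nat \<Rightarrow> ('c \<Rightarrow> 'r) \<times> 'c) \<Rightarrow> (nat \<Rightarrow> ('c \<Rightarrow> 'r) \<times> 'c)" where
  "orbit_map cs x = orbit_seq cs (fst (x 0))"

definition orbit_kernel :: "(nat \<Rightarrow> 'c) \<Rightarrow> (nat \<Rightarrow> ('c \<Rightarrow> 'r) \<times> 'c, 'c, 'r) rmod" where
  "orbit_kernel cs = dual_seq_mod\<lparr>mcarrier := {x \<in> const_seq ` ldual lm. orbit_map cs x = seq_zero}\<rparr>"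

lemma orbit_map_const [simp]: "orbit_map cs (const_seq a) = orbit_seq cs a"
  by (simp add: orbit_map_def)

lemma seq_add_orbit: "seq_add (orbit_seq cs a) (orbit_seq cs b) = orbit_seq cs (\<lambda>c. a c + b c)"
  by (simp add: seq_add_def orbit_seq_def cact_fun_add)
lemma seq_neg_orbit: "seq_neg (orbit_seq cs a) = orbit_seq cs (\<lambda>c. - a c)"
  by (simp add: seq_neg_def orbit_seq_def cact_fun_uminus)
lemma seq_zero_orbit: "seq_zero = orbit_seq cs (\<lambda>c. 0)"
  by (simp add: seq_zero_def orbit_seq_def cact_fun_zero)

lemma act_orbit_seq: "a \<in> ldual lm \<Longrightarrow> g \<in> ldual lm \<Longrightarrow>
   (\<lambda>n. ((\<lambda>c. 0), cact rm Dl (snd (orbit_seq cs a n)) g)) = orbit_seq cs (conv rm Dl a g)"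
  by (simp add: orbit_seq_def cact_conv)

lemma dual_seq_rmodule: "rmodule lm rm Dl eps dual_seq_mod"
  unfolding rmodule_def dual_seq_mod_def rmod.simps
  by (intro conjI ballI)
    (auto simp: seq_add_const seq_neg_const seq_zero_const const_seq_eq_iff zero_in_ldual
      add_in_ldual uminus_in_ldual conv_in_ldual conv_add_left conv_add_right conv_assoc conv_eps
      algebra_simps intro!: imageI)

lemma orbit_rmodule: "rmodule lm rm Dl eps (orbit_mod cs)"
  unfolding rmodule_def orbit_mod_def rmod.simps
  by (intro conjI ballI)
    (auto simp: seq_zero_orbit[of cs] seq_add_orbit seq_neg_orbit zero_in_ldual add_in_ldual
      uminus_in_ldual act_orbit_seq conv_in_ldual conv_add_left conv_add_right conv_assoc conv_eps
      algebra_simps intro!: imageI,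
     simp_all add: orbit_seq_def cact_conv conv_in_ldual cact_eps)

lemma orbit_kernel_rmodule: "rmodule lm rm Dl eps (orbit_kernel cs)"
  unfolding orbit_kernel_def
proof (rule sub_rmodule[OF dual_seq_rmodule])
  let ?S = "{x \<in> const_seq ` ldual lm. orbit_map cs x = seq_zero}"
  show "?S \<subseteq> mcarrier dual_seq_mod" by (auto simp: dual_seq_mod_def)
  show "mzero dual_seq_mod \<in> ?S"
    by (auto simp: dual_seq_mod_def seq_zero_const zero_in_ldual seq_zero_orbit[of cs, symmetric])
  show "madd dual_seq_mod x y \<in> ?S" if "x \<in> ?S" "y \<in> ?S" for x y
    using that by (auto simp: dual_seq_mod_def seq_add_const add_in_ldual seq_add_orbit[symmetric])
      (simp add: seq_add_def seq_zero_def)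
  show "mneg dual_seq_mod x \<in> ?S" if "x \<in> ?S" for x
    using that by (auto simp: dual_seq_mod_def seq_neg_const uminus_in_ldual seq_neg_orbit[symmetric])
      (simp add: seq_neg_def seq_zero_def)
  show "mact dual_seq_mod x f \<in> ?S" if x: "x \<in> ?S" and f: "f \<in> ldual lm" for x f
  proof -
    obtain a where a: "a \<in> ldual lm" "x = const_seq a" "orbit_seq cs a = seq_zero" using x by auto
    have "orbit_seq cs (conv rm Dl a f) = (\<lambda>n. ((\<lambda>c. 0), cact rm Dl (snd (orbit_seq cs a n)) f))"
      using act_orbit_seq[OF a(1) f] by simp
    also have "\<dots> = seq_zero" using a(3) cact_zero[OF f] by (simp add: seq_zero_def)
    finally show ?thesis using a f conv_in_ldual by (auto simp: dual_seq_mod_def)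
  qed
qed

lemma orbit_short_exact:
  "rmodule lm rm Dl eps (orbit_kernel cs) \<and> rmodule lm rm Dl eps dual_seq_mod
   \<and> rmodule lm rm Dl eps (orbit_mod cs)
   \<and> rmod_hom lm (orbit_kernel cs) dual_seq_mod id \<and> rmod_hom lm dual_seq_mod (orbit_mod cs) (orbit_map cs)
   \<and> inj_on id (mcarrier (orbit_kernel cs))
   \<and> id ` mcarrier (orbit_kernel cs) = {x \<in> mcarrier dual_seq_mod. orbit_map cs x = mzero (orbit_mod cs)}
   \<and> orbit_map cs ` mcarrier dual_seq_mod = mcarrier (orbit_mod cs)"
  using orbit_kernel_rmodule[of cs] dual_seq_rmodule orbit_rmodule[of cs]
  by (auto simp: rmod_hom_def orbit_kernel_def dual_seq_mod_def orbit_mod_def seq_add_const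
      add_in_ldual seq_add_orbit act_orbit_seq image_image)

lemma msum_orbit_mod:
  "msum (orbit_mod cs) (map (\<lambda>q. \<lambda>n. ((\<lambda>c. 0), Y q n)) xs) = (\<lambda>n. ((\<lambda>c. 0), \<Sum>q\<leftarrow>xs. Y q n))"
  by (induction xs) (simp_all add: msum_def orbit_mod_def seq_add_def seq_zero_def)

lemma msum_dual_seq_mod:
  "msum dual_seq_mod (map (\<lambda>q. const_seq (Z q)) xs)
     = const_seq (foldr (\<lambda>f g c. f c + g c) (map Z xs) (\<lambda>c. 0))"
  by (induction xs) (simp_all add: msum_def dual_seq_mod_def seq_add_const seq_zero_const)

lemma Rat_dual_seq_mod:
  assumes y: "y \<in> Rat lm eps dual_seq_mod"
  shows "\<exists>g \<in> Rat lm eps (dual_rmod lm rm Dl). y = const_seq g"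
proof -
  obtain ps where yc: "y \<in> const_seq ` ldual lm" and ps: "\<forall>(mi, ci) \<in> set ps. mi \<in> const_seq ` ldual lm"
    and eq: "\<forall>f \<in> ldual lm. const_seq (conv rm Dl (fst (y 0)) f) =
       msum dual_seq_mod (map (\<lambda>(mi, ci). const_seq (conv rm Dl (fst (mi 0)) (\<lambda>c. eps c * f ci))) ps)"
    using y unfolding Rat_def by (auto simp: dual_seq_mod_def)
  obtain g where g: "g \<in> ldual lm" "y = const_seq g" using yc by blast
  let ?ps = "map (\<lambda>(mi, ci). (fst (mi 0), ci)) ps"
  have "g \<in> Rat lm eps (dual_rmod lm rm Dl)"
    unfolding Rat_dual_iff
  proof (intro conjI exI[of _ ?ps] ballI g(1))
    show "\<And>x. x \<in> set ?ps \<Longrightarrow> (\<lambda>(ti, ci). ti \<in> ldual lm) x" using ps by auto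
    fix f assume f: "f \<in> ldual lm"
    have "const_seq (conv rm Dl g f) = msum dual_seq_mod
        (map (\<lambda>q. const_seq ((\<lambda>(mi, ci). conv rm Dl (fst (mi 0)) (\<lambda>c. eps c * f ci)) q)) ps)"
      using eq f g by (simp add: case_prod_unfold)
    then show "conv rm Dl g f = foldr (\<lambda>f g c. f c + g c)
        (map (\<lambda>(ti, ci). conv rm Dl ti (\<lambda>c. eps c * f ci)) ?ps) (\<lambda>c. 0)"
      by (simp add: msum_dual_seq_mod const_seq_eq_iff o_def case_prod_unfold)
  qed
  then show ?thesis using g(2) by blast
qed

text \<open>The key computation: if every b \<cdot> f ((a, b) in Delta c) is expanded in a
  dual basis qs = [(\<phi>, d)], then c \<cdot> (f # g) = \<Sum> (c \<cdot> (f # \<phi>)) g(d) for all g,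
  i.e. the orbit of f is rational with coefficients c \<cdot> (f # \<phi>) and d.\<close>
lemma dual_basis_expansion:
  assumes g: "g \<in> ldual lm"
    and basis: "\<forall>(a, b) \<in> set (Dl c).
      cact rm Dl b f = (\<Sum>(\<phi>, d)\<leftarrow>qs. lm (\<phi> (cact rm Dl b f)) d)"
  shows "cact rm Dl c (conv rm Dl f g) = (\<Sum>(\<phi>, d)\<leftarrow>qs. rm (cact rm Dl c (conv rm Dl f \<phi>)) (g d))"
proof -
  have "cact rm Dl c (conv rm Dl f g) = (\<Sum>(a, b)\<leftarrow>Dl c. rm a (g (cact rm Dl b f)))"
    by (simp add: cact_def conv_def)
  also have "\<dots> = (\<Sum>(a, b)\<leftarrow>Dl c. \<Sum>(\<phi>, d)\<leftarrow>qs. rm (rm a (\<phi> (cact rm Dl b f))) (g d))"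
  proof (intro arg_cong[where f = sum_list] map_cong refl, clarify)
    fix a b assume ab: "(a, b) \<in> set (Dl c)"
    have "cact rm Dl b f = (\<Sum>(\<phi>, d)\<leftarrow>qs. lm (\<phi> (cact rm Dl b f)) d)"
      using basis ab by blast
    then have "g (cact rm Dl b f) = g (\<Sum>(\<phi>, d)\<leftarrow>qs. lm (\<phi> (cact rm Dl b f)) d)"
      by (rule arg_cong)
    also have "\<dots> = (\<Sum>(\<phi>, d)\<leftarrow>qs. \<phi> (cact rm Dl b f) * g d)"
      by (simp add: ldual_sum_list[OF g] o_def case_prod_unfold ldual_lm[OF g])
    finally show "rm a (g (cact rm Dl b f)) = (\<Sum>(\<phi>, d)\<leftarrow>qs. rm (rm a (\<phi> (cact rm Dl b f))) (g d))"
      by (simp add: rm_sum_list_right o_def case_prod_unfold rm_mult)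
  qed
  also have "\<dots> = (\<Sum>(\<phi>, d)\<leftarrow>qs. \<Sum>(a, b)\<leftarrow>Dl c. rm (rm a (\<phi> (cact rm Dl b f))) (g d))"
    using sum_list_swap[of "\<lambda>p q. (\<lambda>(a, b). (\<lambda>(\<phi>, d). rm (rm a (\<phi> (cact rm Dl b f))) (g d))) p q" qs "Dl c"]
    by (simp add: case_prod_unfold)
  also have "\<dots> = (\<Sum>(\<phi>, d)\<leftarrow>qs. rm (cact rm Dl c (conv rm Dl f \<phi>)) (g d))"
    by (simp add: cact_def conv_def rm_sum_list o_def case_prod_unfold)
  finally show ?thesis .
qed

text \<open>Under the left alpha-condition the orbit of any f is rational, provided the
  sequence cs takes only finitely many values: expand the finitely many elements
  b \<cdot> f, (a, b) in Delta (cs n), in a dual basis.\<close>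
lemma orbit_seq_rational:
  assumes alpha: "left_alpha lm" and cs: "finite (range cs)" and f: "f \<in> ldual lm"
  shows "orbit_seq cs f \<in> Rat lm eps (orbit_mod cs)"
proof -
  define G where "G = (\<Union>c\<in>range cs. (\<lambda>(a, b). cact rm Dl b f) ` set (Dl c))"
  have "finite G" unfolding G_def by (intro finite_UN_I cs) simp
  then obtain qs :: "(('c \<Rightarrow> 'r) \<times> 'c) list" where qs: "\<forall>(\<phi>, d) \<in> set qs. \<phi> \<in> ldual lm"
    and basis: "\<forall>z \<in> G. z = (\<Sum>(\<phi>, d)\<leftarrow>qs. lm (\<phi> z) d)"
    using alpha unfolding left_alpha_def by blast
  let ?ps = "map (\<lambda>(\<phi>, d). (orbit_seq cs (conv rm Dl f \<phi>), d)) qs"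
  show ?thesis
    unfolding Rat_def
  proof (intro CollectI conjI exI[of _ ?ps] ballI)
    show "orbit_seq cs f \<in> mcarrier (orbit_mod cs)" using f by (simp add: orbit_mod_def)
    show "\<And>x. x \<in> set ?ps \<Longrightarrow> (\<lambda>(mi, ci). mi \<in> mcarrier (orbit_mod cs)) x"
      using qs conv_in_ldual[OF f] by (auto simp: orbit_mod_def)
    fix g assume g: "g \<in> ldual lm"
    have expand: "cact rm Dl (cs n) (conv rm Dl f g)
        = (\<Sum>(\<phi>, d)\<leftarrow>qs. rm (cact rm Dl (cs n) (conv rm Dl f \<phi>)) (g d))" for n
      by (rule dual_basis_expansion[OF g]) (use basis in \<open>fastforce simp: G_def\<close>)
    have "mact (orbit_mod cs) (orbit_seq cs f) g = orbit_seq cs (conv rm Dl f g)"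
      using act_orbit_seq[OF f g] by (simp add: orbit_mod_def)
    also have "\<dots> = msum (orbit_mod cs)
        (map (\<lambda>q n. ((\<lambda>c. 0), (\<lambda>(\<phi>, d). rm (cact rm Dl (cs n) (conv rm Dl f \<phi>)) (g d)) q)) qs)"
      unfolding msum_orbit_mod by (simp add: orbit_seq_def expand case_prod_unfold)
    also have "map (\<lambda>q n. ((\<lambda>c. 0), (\<lambda>(\<phi>, d). rm (cact rm Dl (cs n) (conv rm Dl f \<phi>)) (g d)) q)) qs
        = map (\<lambda>(mi, ci). mact (orbit_mod cs) mi (\<lambda>c. eps c * g ci)) ?ps"
      by (simp add: orbit_mod_def orbit_seq_def cact_eps_mult case_prod_unfold)
    finally show "mact (orbit_mod cs) (orbit_seq cs f) g
        = msum (orbit_mod cs) (map (\<lambda>(mi, ci). mact (orbit_mod cs) mi (\<lambda>c. eps c * g ci)) ?ps)" .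
  qed
qed

text \<open>(iii) \<Longrightarrow> (i): lift the rational orbit of f along the epimorphism
  *C \<rightarrow> orbit; the rational preimage g satisfies c \<cdot> g = c \<cdot> f on F.\<close>
theorem Rat_exact_imp_dense:
  assumes alpha: "left_alpha lm"
    and exact: "Rat_exact lm rm Dl eps TYPE(nat \<Rightarrow> ('c \<Rightarrow> 'r) \<times> 'c)
              TYPE(nat \<Rightarrow> ('c \<Rightarrow> 'r) \<times> 'c) TYPE(nat \<Rightarrow> ('c \<Rightarrow> 'r) \<times> 'c)"
  shows "dense_Cadic_top lm rm Dl (Rat lm eps (dual_rmod lm rm Dl))"
  unfolding dense_Cadic_top_def
proof (intro ballI allI impI)
  fix f F assume f: "f \<in> ldual lm" and F: "finite (F :: 'c set)"
  obtain xs where xs: "set xs = F" using finite_list[OF F] by blast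
  define cs where "cs n = (if n < length xs then xs ! n else 0)" for n
  have "range cs \<subseteq> insert 0 F" by (auto simp: cs_def xs[symmetric])
  then have "finite (range cs)" using F finite_subset by blast
  then have "orbit_seq cs f \<in> Rat lm eps (orbit_mod cs)"
    using orbit_seq_rational[OF alpha _ f] by blast
  moreover have "orbit_map cs ` Rat lm eps dual_seq_mod = Rat lm eps (orbit_mod cs)"
    using exact[unfolded Rat_exact_def, rule_format, OF orbit_short_exact] by blast
  ultimately obtain y where y: "y \<in> Rat lm eps dual_seq_mod" "orbit_map cs y = orbit_seq cs f"
    by (metis imageE)
  obtain g where g: "g \<in> Rat lm eps (dual_rmod lm rm Dl)" "y = const_seq g"
    using Rat_dual_seq_mod[OF y(1)] by blast
  have "cact rm Dl (cs n) g = cact rm Dl (cs n) f" for n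
    using y(2) g(2) by (simp add: orbit_seq_def fun_eq_iff)
  moreover have "\<forall>c \<in> F. \<exists>n. cs n = c"
    by (metis xs cs_def in_set_conv_nth)
  ultimately show "\<exists>g \<in> Rat lm eps (dual_rmod lm rm Dl). \<forall>c \<in> F. cact rm Dl c g = cact rm Dl c f"
    using g(1) by metis
qed

end

theorem proposition2p3:
  fixes lm :: "'r::ring_1 \<Rightarrow> 'c::ab_group_add \<Rightarrow> 'c"
    and rm :: "'c \<Rightarrow> 'r \<Rightarrow> 'c"
    and Dl :: "'c \<Rightarrow> ('c \<times> 'c) list"
    and eps :: "'c \<Rightarrow> 'r"
  assumes "coring lm rm Dl eps"
    and "left_alpha lm"
  shows "(dense_Cadic_top lm rm Dl (Rat lm eps (dual_rmod lm rm Dl))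
            \<longleftrightarrow> dense_finite_top lm (Rat lm eps (dual_rmod lm rm Dl)))
       \<and> (dense_finite_top lm (Rat lm eps (dual_rmod lm rm Dl))
            \<longrightarrow> Rat_exact lm rm Dl eps TYPE('k) TYPE('m) TYPE('n))
       \<and> (Rat_exact lm rm Dl eps TYPE(nat \<Rightarrow> ('c \<Rightarrow> 'r) \<times> 'c)
              TYPE(nat \<Rightarrow> ('c \<Rightarrow> 'r) \<times> 'c) TYPE(nat \<Rightarrow> ('c \<Rightarrow> 'r) \<times> 'c)
            \<longrightarrow> dense_Cadic_top lm rm Dl (Rat lm eps (dual_rmod lm rm Dl)))"
proof -
  interpret R_coring lm rm Dl eps by unfold_locales (rule assms(1))
  have Rat_in_dual: "Rat lm eps (dual_rmod lm rm Dl) \<subseteq> ldual lm"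
    using Rat_dual_in_ldual by blast
  show ?thesis
    using dense_Cadic_imp_finite[OF _ Rat_in_dual] dense_finite_imp_Cadic
      dense_imp_Rat_exact[where 'k = 'k and 'm = 'm and 'n = 'n] Rat_exact_imp_dense[OF assms(2)]
    by blast
qed
end
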